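(* Let $M$ be the $3\times 2$ array of cells (3 columns, 2 rows) whose standard figure $F\subseteq[0,3]\times[0,2]\subseteq\mathbb{R}^2$ is the union of the segment from $(0,0)$ to $(1,1)$ (increasing, bottom cell of column 1), the segment from $(1,1)$ to $(2,2)$ (increasing, top cell of column 2), the segment from $(1,1)$ to $(2,0)$ (decreasing, bottom cell of column 2), and the segment from $(2,2)$ to $(3,1)$ (decreasing, top cell of column 3). Then a permutation is a simple permutation avoiding both $4231$ and $3124$ if and only if it is a simple permutation lying in $\operatorname{Geom}(M)$.
   Context: A permutation $\pi$ avoids $\sigma$ if no subsequence of $\pi$ is order-isomorphic to $\sigma$. An interval of a permutation $\pi$ is a set of contiguous positions $\{a,a+1,\dots,b\}$ whose values $\{\pi(i)\}$ also form a set of contiguous integers; intervals of size $0$, $1$ and $n$ are trivial, and $\pi$ is simple if all its intervals are trivial. For a figure $F\subseteq\mathbb{R}^2$, $\operatorname{Geom}(M)$ is the set of all permutations obtained as follows: choose finitely many points of $F$, no two on a common horizontal or vertical line, label them $1,\dots,n$ from bottom to top, and read the labels from left to right. (In matrix form, with the top row displayed first, $M=\begin{pmatrix}0&1&-1\\1&-1&0\end{pmatrix}$, where $1$ denotes an increasing diagonal segment across the cell, $-1$ a decreasing one, $0$ an empty cell.) *)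

theory Defs
  imports Complex_Main
begin

definition is_perm :: "nat list \<Rightarrow> bool" where
  "is_perm p \<longleftrightarrow> distinct p \<and> set p = {1..length p}"

definition order_iso :: "nat list \<Rightarrow> nat list \<Rightarrow> bool" where
  "order_iso a b \<longleftrightarrow> length a = length b \<and>
     (\<forall>i<length a. \<forall>j<length a. a ! i < a ! j \<longleftrightarrow> b ! i < b ! j)"

definition contains :: "nat list \<Rightarrow> nat list \<Rightarrow> bool" where
  "contains p s \<longleftrightarrow> (\<exists>idx. length idx = length s \<and> sorted_wrt (<) idx \<and>
      (\<forall>k\<in>set idx. k < length p) \<and> order_iso (map (\<lambda>k. p ! k) idx) s)"

definition avoids :: "nat list \<Rightarrow> nat list \<Rightarrow> bool" where
  "avoids p s \<longleftrightarrow> \<not> contains p s"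

definition is_interval :: "nat list \<Rightarrow> nat set \<Rightarrow> bool" where
  "is_interval p I \<longleftrightarrow> (\<exists>a b. a \<le> b \<and> b < length p \<and> I = {a..b} \<and>
      (\<exists>c. (\<lambda>k. p ! k) ` I = {c..c + (b - a)}))"

definition simple_perm :: "nat list \<Rightarrow> bool" where
  "simple_perm p \<longleftrightarrow> (\<forall>I. is_interval p I \<longrightarrow> card I \<le> 1 \<or> card I = length p)"

definition figM :: "(real \<times> real) set" where
  "figM = {(t, t) | t. 0 \<le> t \<and> t \<le> 1}
        \<union> {(t, t) | t. 1 \<le> t \<and> t \<le> 2}
        \<union> {(t, 2 - t) | t. 1 \<le> t \<and> t \<le> 2}
        \<union> {(t, 4 - t) | t. 2 \<le> t \<and> t \<le> 3}"

definition Geom :: "(real \<times> real) set \<Rightarrow> nat list set" where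
  "Geom F = {p. is_perm p \<and> (\<exists>x y :: nat \<Rightarrow> real.
      (\<forall>i<length p. (x i, y i) \<in> F) \<and>
      (\<forall>i<length p. \<forall>j<length p. i < j \<longrightarrow> x i < x j) \<and>
      (\<forall>i<length p. \<forall>j<length p. y i < y j \<longleftrightarrow> p ! i < p ! j))}"

end

theory Submission
  imports Defs
begin

text \<open>Points of the figure never form the patterns 4231 or 3124, a finite check on its four
segments, and the permutations drawn on a figure are closed under taking patterns; this gives
one direction.

Conversely, let p be simple, avoid 4231 and 3124, and let L be its last entry. If p contained
4123, 2134, 4312 or 3241 with the last entry playing the role of 3, 4, 2 or 1 respectively,
then an extremal such occurrence would yield a proper segment of positions whose values no
outside value separates, that is, a nontrivial interval. Without these patterns, the longest
increasing prefix of values below L and the shortest decreasing suffix of values at least L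
leave a middle part in which the values at least L increase and those below L decrease. Such a
gridded permutation is drawn on the figure; in the middle column the x-coordinate of a point
encodes its position, so that the points on the two middle segments interleave correctly.\<close>

lemma is_perm_nth_eq_iff:
  assumes "is_perm p" "i < length p" "j < length p"
  shows "p ! i = p ! j \<longleftrightarrow> i = j"
  using assms unfolding is_perm_def by (simp add: nth_eq_iff_index_eq)

lemma is_perm_nth_bounds:
  assumes "is_perm p" "i < length p"
  shows "1 \<le> p ! i" "p ! i \<le> length p"
  using assms nth_mem[of i p] unfolding is_perm_def by auto

lemma is_perm_obtain_nth:
  assumes "is_perm p" "1 \<le> v" "v \<le> length p"
  obtains i where "i < length p" "p ! i = v"
  using assms unfolding is_perm_def by (metis atLeastAtMost_iff in_set_conv_nth)

definition value_outside :: "nat list \<Rightarrow> nat set \<Rightarrow> nat \<Rightarrow> bool" where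
  "value_outside p S d \<longleftrightarrow> (\<forall>q\<in>S. p ! d < p ! q) \<or> (\<forall>q\<in>S. p ! q < p ! d)"

lemma is_interval_if_value_outside:
  assumes perm: "is_perm p" and ab: "a \<le> b" "b < length p"
    and outside: "\<And>d. d < length p \<Longrightarrow> d \<notin> {a..b} \<Longrightarrow> value_outside p {a..b} d"
  shows "is_interval p {a..b}"
proof -
  let ?V = "(!) p ` {a..b}"
  define lo where "lo = Min ?V"
  define hi where "hi = Max ?V"
  have fin: "finite ?V" and ne: "?V \<noteq> {}" using ab by auto
  have lo: "lo \<in> ?V" and hi: "hi \<in> ?V" unfolding lo_def hi_def using fin ne by simp_all
  have "{lo..hi} \<subseteq> ?V"
  proof
    fix v assume v: "v \<in> {lo..hi}"
    obtain i k where "i \<in> {a..b}" "lo = p ! i" "k \<in> {a..b}" "hi = p ! k" using lo hi by blast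
    then have "1 \<le> v" "v \<le> length p"
      using v ab is_perm_nth_bounds[OF perm, of i] is_perm_nth_bounds[OF perm, of k] by auto
    then obtain d where d: "d < length p" "p ! d = v" using is_perm_obtain_nth[OF perm] by blast
    have "d \<in> {a..b}"
    proof (rule ccontr)
      assume "d \<notin> {a..b}"
      then have "value_outside p {a..b} d" using outside d(1) by blast
      then show False using v d(2) lo hi unfolding value_outside_def by fastforce
    qed
    then show "v \<in> ?V" using d(2) by blast
  qed
  moreover have "?V \<subseteq> {lo..hi}" using fin by (auto simp: lo_def hi_def)
  ultimately have V: "?V = {lo..hi}" by blast
  have "inj_on ((!) p) {a..b}"
    using ab by (auto intro!: inj_onI simp: is_perm_nth_eq_iff[OF perm])
  then have "card ?V = Suc (b - a)" using ab by (simp add: card_image)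
  then have "hi = lo + (b - a)" using V lo hi by auto
  then show ?thesis unfolding is_interval_def using ab V by blast
qed

section \<open>Permutations drawn on the figure avoid 4231 and 3124\<close>

lemma Geom_closed_under_patterns:
  assumes "p \<in> Geom F" "contains p s" "is_perm s"
  shows "s \<in> Geom F"
proof -
  obtain x y where pts: "\<forall>i<length p. (x i, y i) \<in> F"
    and xs: "\<forall>i<length p. \<forall>j<length p. i < j \<longrightarrow> x i < x j"
    and ys: "\<forall>i<length p. \<forall>j<length p. y i < y j \<longleftrightarrow> p ! i < p ! j"
    using assms(1) unfolding Geom_def by blast
  obtain idx where idx: "length idx = length s" "sorted_wrt (<) idx" "\<forall>k\<in>set idx. k < length p"
    and iso: "order_iso (map (\<lambda>k. p ! k) idx) s"
    using assms(2) unfolding contains_def by blast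
  have bound: "idx ! i < length p" if "i < length s" for i
    using idx that by (metis nth_mem)
  have "\<forall>i<length s. \<forall>j<length s. i < j \<longrightarrow> x (idx ! i) < x (idx ! j)"
    using xs bound sorted_wrt_nth_less[OF idx(2)] idx(1) by auto
  moreover have "\<forall>i<length s. \<forall>j<length s. y (idx ! i) < y (idx ! j) \<longleftrightarrow> s ! i < s ! j"
    using ys bound iso idx(1) unfolding order_iso_def by auto
  ultimately show ?thesis
    using assms(3) pts bound unfolding Geom_def
    by (intro CollectI conjI exI[of _ "\<lambda>i. x (idx ! i)"] exI[of _ "\<lambda>i. y (idx ! i)"]) auto
qed

lemma figM_iff:
  "(a, b) \<in> figM \<longleftrightarrow> (b = a \<and> 0 \<le> a \<and> a \<le> 2) \<or> (b = 2 - a \<and> 1 \<le> a \<and> a \<le> 2)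
     \<or> (b = 4 - a \<and> 2 \<le> a \<and> a \<le> 3)"
  unfolding figM_def by auto

lemma Geom_figM_four_points:
  assumes "s \<in> Geom figM" "length s = 4"
  obtains x y where "\<And>i. i < 4 \<Longrightarrow> (x i, y i) \<in> figM"
    "x 0 < x 1" "x 1 < x 2" "x 2 < x 3"
    "\<And>i j. i < 4 \<Longrightarrow> j < 4 \<Longrightarrow> y i < y j \<longleftrightarrow> s ! i < s ! j"
proof -
  obtain x y where "\<forall>i<4. (x i, y i) \<in> figM" "\<forall>i<4. \<forall>j<4. i < j \<longrightarrow> x i < x j"
    "\<forall>i<4. \<forall>j<4. y i < y j \<longleftrightarrow> s ! i < s ! j"
    using assms unfolding Geom_def by auto
  then show thesis by (intro that[of x y]) simp_all
qed

lemma pattern_4231_not_in_Geom_figM: "[4,2,3,1] \<notin> Geom figM"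
proof
  assume "[4,2,3,1] \<in> Geom figM"
  then obtain x y where pts: "\<And>i. i < 4 \<Longrightarrow> (x i, y i) \<in> figM"
    and "x 0 < x 1" "x 1 < x 2" "x 2 < x 3"
    and ys: "\<And>i j. i < 4 \<Longrightarrow> j < 4 \<Longrightarrow> y i < y j \<longleftrightarrow> [4,2,3,1::nat] ! i < [4,2,3,1] ! j"
    by (rule Geom_figM_four_points) auto
  moreover have "y 3 < y 1" "y 1 < y 2" "y 2 < y 0" using ys[of 3 1] ys[of 1 2] ys[of 2 0] by simp_all
  moreover have "(x 0, y 0) \<in> figM" "(x 1, y 1) \<in> figM" "(x 2, y 2) \<in> figM" "(x 3, y 3) \<in> figM"
    using pts by simp_all
  ultimately show False unfolding figM_iff by (elim disjE conjE; linarith)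
qed

lemma pattern_3124_not_in_Geom_figM: "[3,1,2,4] \<notin> Geom figM"
proof
  assume "[3,1,2,4] \<in> Geom figM"
  then obtain x y where pts: "\<And>i. i < 4 \<Longrightarrow> (x i, y i) \<in> figM"
    and "x 0 < x 1" "x 1 < x 2" "x 2 < x 3"
    and ys: "\<And>i j. i < 4 \<Longrightarrow> j < 4 \<Longrightarrow> y i < y j \<longleftrightarrow> [3,1,2,4::nat] ! i < [3,1,2,4] ! j"
    by (rule Geom_figM_four_points) auto
  moreover have "y 1 < y 2" "y 2 < y 0" "y 0 < y 3" using ys[of 1 2] ys[of 2 0] ys[of 0 3] by simp_all
  moreover have "(x 0, y 0) \<in> figM" "(x 1, y 1) \<in> figM" "(x 2, y 2) \<in> figM" "(x 3, y 3) \<in> figM"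
    using pts by simp_all
  ultimately show False unfolding figM_iff by (elim disjE conjE; linarith)
qed

lemma Geom_figM_avoids:
  assumes "p \<in> Geom figM"
  shows "avoids p [4,2,3,1]" "avoids p [3,1,2,4]"
proof -
  have "is_perm [4,2,3,1]" "is_perm [3,1,2,4]" by (auto simp: is_perm_def)
  then show "avoids p [4,2,3,1]" "avoids p [3,1,2,4]"
    using Geom_closed_under_patterns[OF assms] pattern_4231_not_in_Geom_figM
      pattern_3124_not_in_Geom_figM unfolding avoids_def by blast+
qed

section \<open>Simple permutations avoiding 4231 and 3124 are gridded\<close>

text \<open>The position ranges [0, c1), [c1, c2) and [c2, length p) are the three columns of M,
the values below L and those at least L its two rows.\<close>

definition figM_gridding :: "nat list \<Rightarrow> nat \<Rightarrow> nat \<Rightarrow> nat \<Rightarrow> bool" where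
  "figM_gridding p c1 c2 L \<longleftrightarrow> c1 \<le> c2 \<and> c2 \<le> length p \<and>
     (\<forall>q<c1. p!q < L) \<and> (\<forall>q\<in>{c2..<length p}. L \<le> p!q) \<and>
     strict_mono_on {..<c1} ((!) p) \<and> strict_antimono_on {c2..<length p} ((!) p) \<and>
     strict_mono_on {q\<in>{c1..<c2}. L \<le> p!q} ((!) p) \<and>
     strict_antimono_on {q\<in>{c1..<c2}. p!q < L} ((!) p)"

lemma contains_4231I:
  assumes "i < j" "j < k" "k < l" "l < length p" "p!l < p!j" "p!j < p!k" "p!k < p!i"
  shows "contains p [4,2,3,1]"
  unfolding contains_def order_iso_def using assms
  by (intro exI[of _ "[i,j,k,l]"]) (auto simp: less_Suc_eq numeral_eq_Suc)

lemma contains_3124I: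
  assumes "i < j" "j < k" "k < l" "l < length p" "p!j < p!k" "p!k < p!i" "p!i < p!l"
  shows "contains p [3,1,2,4]"
  unfolding contains_def order_iso_def using assms
  by (intro exI[of _ "[i,j,k,l]"]) (auto simp: less_Suc_eq numeral_eq_Suc)

locale simple_avoider =
  fixes p :: "nat list"
  assumes perm: "is_perm p" and simple: "simple_perm p"
    and avoids_4231: "avoids p [4,2,3,1]" and avoids_3124: "avoids p [3,1,2,4]"
    and nonempty: "p \<noteq> []"
begin

abbreviation "n \<equiv> length p"
abbreviation "L \<equiv> p ! (n - 1)"

lemma last_less_length [simp]: "n - Suc 0 < n"
  using nonempty by simp

lemma less_length_if_less_last [simp]: "q < n - Suc 0 \<Longrightarrow> q < n"
  by linarith

lemma nth_eq_iff [simp]: "i < n \<Longrightarrow> j < n \<Longrightarrow> p ! i = p ! j \<longleftrightarrow> i = j"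
  by (rule is_perm_nth_eq_iff[OF perm])

lemma nth_less_or_greater: "i < n \<Longrightarrow> j < n \<Longrightarrow> i \<noteq> j \<Longrightarrow> p!i < p!j \<or> p!j < p!i"
  by (simp add: nat_neq_iff[symmetric])

lemma no_4231:
  "\<lbrakk>i < j; j < k; k < l; l < n; p!l < p!j; p!j < p!k; p!k < p!i\<rbrakk> \<Longrightarrow> False"
  using avoids_4231 contains_4231I unfolding avoids_def by blast

lemma no_3124:
  "\<lbrakk>i < j; j < k; k < l; l < n; p!j < p!k; p!k < p!i; p!i < p!l\<rbrakk> \<Longrightarrow> False"
  using avoids_3124 contains_3124I unfolding avoids_def by blast

lemma no_separated_segment:
  assumes "a < b" "b < n" "0 < a \<or> b < n - 1"
    and "\<And>d. d < n \<Longrightarrow> d \<notin> {a..b} \<Longrightarrow> value_outside p {a..b} d"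
  shows False
proof -
  have "is_interval p {a..b}" using assms by (intro is_interval_if_value_outside[OF perm]) auto
  then have "card {a..b} \<le> 1 \<or> card {a..b} = n" using simple unfolding simple_perm_def by blast
  then show False using assms by auto
qed

lemma value_outside_before_maximal_4123:
  assumes "i < j" "j < k" "k < n - 1" "p!j < p!k" "p!k < L" "L < p!i"
    and k_max: "\<And>q. j < q \<Longrightarrow> q < n - 1 \<Longrightarrow> p!q < L \<Longrightarrow> p!q \<le> p!k"
    and d: "d < k"
  shows "value_outside p {k..n-1} d"
proof -
  have "p!d \<noteq> p!k" "p!d \<noteq> L" using d assms by auto
  then consider "p!d < p!k" | "p!k < p!d" "p!d < L" | "L < p!d" by linarith
  then show ?thesis
  proof cases
    case 1
    have "p!d < p!q" if q: "q \<in> {k..n-1}" for q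
    proof (rule ccontr)
      assume "\<not> p!d < p!q"
      then have qd: "p!q < p!d" using nth_less_or_greater[of d q] d q assms by auto
      then have q': "k < q" "q < n - 1" "p!q < L" using 1 q assms by (auto simp: le_less)
      then have "p!j < p!q" using no_4231[of i j k q] nth_less_or_greater[of q j] assms by auto
      then show False
        using no_3124[of d j q "n-1"] no_4231[of i d k q] qd q' 1 d assms
        by (cases d j rule: linorder_cases) auto
    qed
    then show ?thesis unfolding value_outside_def by blast
  next
    case 2
    have "\<not> j < d" using k_max[of d] 2 d assms by fastforce
    then show ?thesis using no_3124[of d j k "n-1"] 2 assms by (cases "d = j") auto
  next
    case 3
    have "p!q < p!d" if q: "q \<in> {k..n-1}" for q
    proof (rule ccontr)
      assume "\<not> p!q < p!d"
      then have dq: "p!d < p!q" using nth_less_or_greater[of d q] d q assms by auto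
      then have q': "k < q" "q < n - 1" "L < p!q" using 3 q assms by (auto simp: le_less)
      then have "p!q < p!i" using no_3124[of i j k q] nth_less_or_greater[of q i] assms by auto
      then show False
        using no_3124[of d j k q] no_4231[of i d q "n-1"] dq q' 3 d assms
        by (cases d j rule: linorder_cases) auto
    qed
    then show ?thesis unfolding value_outside_def by blast
  qed
qed

lemma no_4123_ending_last:
  assumes "i < j" "j < k0" "k0 < n - 1" "p!j < p!k0" "p!k0 < L" "L < p!i"
  shows False
proof -
  let ?below = "\<lambda>q. j < q \<and> q < n - 1 \<and> p!q < L"
  obtain k where k: "?below k" and k_max: "\<And>q. ?below q \<Longrightarrow> p!q \<le> p!k"
    using ex_has_greatest_nat[of ?below k0 "(!) p" L] assms by auto
  then have "p!j < p!k" using assms by fastforce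
  then have "value_outside p {k..n-1} d" if "d < k" for d
    using value_outside_before_maximal_4123[of i j k d] k k_max assms that by auto
  then show False
    using no_separated_segment[of k "n - 1"] k assms by fastforce
qed

lemma later_value_outside_below:
  assumes "i < j" "j < q" "q < n - 1" "p!j < p!i" "\<forall>d\<in>{i..j}. p!d < L" "p!q < L"
  shows "value_outside p {i..j} q"
proof -
  have ne: "p!q < p!d \<or> p!d < p!q" if "d \<in> {i..j}" for d
    using that assms by (simp add: nat_neq_iff[symmetric])
  then consider "p!q < p!j" | "p!j < p!q" "p!q < p!i" | "p!i < p!q"
    using assms by (metis atLeastAtMost_iff le_refl less_imp_le)
  then show ?thesis
  proof cases
    case 1
    have "p!q < p!d" if d: "d \<in> {i..j}" for d
      using no_3124[of i d q "n-1"] ne[OF d] d 1 assms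
      by (cases "d = i \<or> d = j") (auto simp: not_less le_less)
    then show ?thesis unfolding value_outside_def by blast
  next
    case 2
    then show ?thesis using no_3124[of i j q "n-1"] assms by auto
  next
    case 3
    have "p!d < p!q" if d: "d \<in> {i..j}" for d
      using no_3124[of d j q "n-1"] ne[OF d] d 3 assms
      by (cases "d = i \<or> d = j") (auto simp: not_less le_less)
    then show ?thesis unfolding value_outside_def by blast
  qed
qed

lemma later_value_outside_above:
  assumes "i < j" "j < q" "q < n - 1" "p!j < p!i" "\<forall>d\<in>{i..j}. L < p!d" "L < p!q"
  shows "value_outside p {i..j} q"
proof -
  have ne: "p!q < p!d \<or> p!d < p!q" if "d \<in> {i..j}" for d
    using that assms by (simp add: nat_neq_iff[symmetric])
  then consider "p!q < p!j" | "p!j < p!q" "p!q < p!i" | "p!i < p!q"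
    using assms by (metis atLeastAtMost_iff le_refl less_imp_le)
  then show ?thesis
  proof cases
    case 1
    have "p!q < p!d" if d: "d \<in> {i..j}" for d
      using no_4231[of i d q "n-1"] ne[OF d] d 1 assms
      by (cases "d = i \<or> d = j") (auto simp: not_less le_less)
    then show ?thesis unfolding value_outside_def by blast
  next
    case 2
    then show ?thesis using no_4231[of i j q "n-1"] assms by auto
  next
    case 3
    have "p!d < p!q" if d: "d \<in> {i..j}" for d
      using no_4231[of d j q "n-1"] ne[OF d] d 3 assms
      by (cases "d = i \<or> d = j") (auto simp: not_less le_less)
    then show ?thesis unfolding value_outside_def by blast
  qed
qed

lemma no_separated_descent:
  assumes "i < j" "j < n - 1" "p!j < p!i"
    and side: "(\<forall>d\<in>{i..j}. p!d < L) \<or> (\<forall>d\<in>{i..j}. L < p!d)"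
    and before: "\<And>u. u < i \<Longrightarrow> value_outside p {i..j} u"
  shows False
proof (rule no_separated_segment[of i j])
  fix q assume q: "q < n" "q \<notin> {i..j}"
  then consider "q < i" | "j < q" "q < n - 1" | "q = n - 1" by fastforce
  then show "value_outside p {i..j} q"
  proof cases
    case 2
    have "p!q \<noteq> L" using 2 by simp
    then show ?thesis
    proof (cases "p!q < L")
      case True
      then show ?thesis using side later_value_outside_below[of i j q] 2 assms
        unfolding value_outside_def by fastforce
    next
      case False
      then show ?thesis using side later_value_outside_above[of i j q] 2 assms \<open>p!q \<noteq> L\<close>
        unfolding value_outside_def by fastforce
    qed
  qed (use before side in \<open>auto simp: value_outside_def\<close>)
qed (use assms in auto)

lemma no_2134_ending_last:
  assumes "i0 < j0" "j0 < k0" "k0 < n - 1" "p!j0 < p!i0" "p!i0 < p!k0" "p!k0 < L"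
  shows False
proof -
  let ?occ = "\<lambda>i. \<exists>j k. i < j \<and> j < k \<and> k < n - 1 \<and> p!j < p!i \<and> p!i < p!k \<and> p!k < L"
  obtain i where "?occ i" and i_min: "\<And>u. ?occ u \<Longrightarrow> i \<le> u"
    using ex_has_least_nat[of ?occ i0 "\<lambda>i. i"] assms by blast
  then obtain j k where ijk: "i < j" "j < k" "k < n - 1" "p!j < p!i" "p!i < p!k" "p!k < L"
    by blast
  have before_j: "p!u < L" if "u < j" for u
    using no_4123_ending_last[of u j k] nth_less_or_greater[of u "n - 1"] that ijk by auto
  have below_k: "p!d < p!k" if d: "d \<in> {i..j}" for d
    using no_3124[of d j k "n - 1"] nth_less_or_greater[of d k] before_j[of d] d ijk
    by (cases "d = j") auto
  have "value_outside p {i..j} u" if u: "u < i" for u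
  proof -
    have "p!u < p!d" if d: "d \<in> {i..j}" for d
    proof (rule ccontr)
      assume "\<not> p!u < p!d"
      then have du: "p!d < p!u" using nth_less_or_greater[of u d] u d ijk by auto
      show False
      proof (cases "p!u < p!k")
        case True
        then have "?occ u" using du u d ijk by (intro exI[of _ d] exI[of _ k]) auto
        then show False using i_min u by fastforce
      next
        case False
        then show False
          using no_3124[of u j k "n - 1"] nth_less_or_greater[of u k] before_j[of u] u ijk by auto
      qed
    qed
    then show ?thesis unfolding value_outside_def by blast
  qed
  then show False
    using no_separated_descent[of i j] below_k ijk by fastforce
qed

lemma no_4312_ending_last:
  assumes "i0 < j0" "j0 < k0" "k0 < n - 1" "p!k0 < L" "L < p!j0" "p!j0 < p!i0"
  shows False
proof -
  let ?occ = "\<lambda>i. \<exists>j k. i < j \<and> j < k \<and> k < n - 1 \<and> p!k < L \<and> L < p!j \<and> p!j < p!i"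
  obtain i where "?occ i" and i_min: "\<And>u. ?occ u \<Longrightarrow> i \<le> u"
    using ex_has_least_nat[of ?occ i0 "\<lambda>i. i"] assms by blast
  then obtain j k where ijk: "i < j" "j < k" "k < n - 1" "p!k < L" "L < p!j" "p!j < p!i"
    by blast
  have above: "L < p!d" if d: "d \<in> {i..j}" for d
  proof (rule ccontr)
    assume "\<not> L < p!d"
    then have dL: "p!d < L" using nth_less_or_greater[of d "n - 1"] d ijk by auto
    then have "i < d" "d < j" using d ijk by (auto simp: le_less)
    then show False
      using no_4123_ending_last[of i d k] no_4231[of i d j k] nth_less_or_greater[of d k] dL ijk
      by auto
  qed
  have "value_outside p {i..j} u" if u: "u < i" for u
  proof (cases "p!u < L")
    case True
    then show ?thesis using above unfolding value_outside_def by fastforce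
  next
    case False
    have "p!u < p!d" if d: "d \<in> {i..j}" for d
    proof (rule ccontr)
      assume "\<not> p!u < p!d"
      then have "p!d < p!u" using nth_less_or_greater[of u d] u d ijk by auto
      then have "?occ u" using above[OF d] u d ijk by (intro exI[of _ d] exI[of _ k]) auto
      then show False using i_min u by fastforce
    qed
    then show ?thesis unfolding value_outside_def by blast
  qed
  then show False
    using no_separated_descent[of i j] above ijk by fastforce
qed

lemma no_3241_ending_last:
  assumes "i0 < j0" "j0 < k0" "k0 < n - 1" "L < p!j0" "p!j0 < p!i0" "p!i0 < p!k0"
  shows False
proof -
  let ?occ = "\<lambda>i. \<exists>j k. i < j \<and> j < k \<and> k < n - 1 \<and> L < p!j \<and> p!j < p!i \<and> p!i < p!k"
  obtain i where "?occ i" and i_min: "\<And>u. ?occ u \<Longrightarrow> i \<le> u"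
    using ex_has_least_nat[of ?occ i0 "\<lambda>i. i"] assms by blast
  then obtain j k where ijk: "i < j" "j < k" "k < n - 1" "L < p!j" "p!j < p!i" "p!i < p!k"
    by blast
  have above: "L < p!d" if d: "d \<in> {i..j}" for d
  proof (rule ccontr)
    assume "\<not> L < p!d"
    then have dL: "p!d < L" using nth_less_or_greater[of d "n - 1"] d ijk by auto
    then have "i < d" "d < j" using d ijk by (auto simp: le_less)
    then show False using no_3124[of i d j k] dL ijk by auto
  qed
  have "value_outside p {i..j} u" if u: "u < i" for u
  proof (cases "p!u < L")
    case True
    then show ?thesis using above unfolding value_outside_def by fastforce
  next
    case False
    have "p!u < p!d" if d: "d \<in> {i..j}" for d
    proof (rule ccontr)
      assume "\<not> p!u < p!d"
      then have du: "p!d < p!u" using nth_less_or_greater[of u d] u d ijk by auto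
      show False
      proof (cases "p!u < p!k")
        case True
        then have "?occ u" using above[OF d] du u d ijk by (intro exI[of _ d] exI[of _ k]) auto
        then show False using i_min u by fastforce
      next
        case False
        then show False
          using no_4231[of u j k "n - 1"] nth_less_or_greater[of u k] u ijk by auto
      qed
    qed
    then show ?thesis unfolding value_outside_def by blast
  qed
  then show False
    using no_separated_descent[of i j] above ijk by fastforce
qed

definition bottom_increasing_prefix :: "nat \<Rightarrow> bool" where
  "bottom_increasing_prefix c \<longleftrightarrow> c \<le> n \<and> (\<forall>t<c. p!t < L) \<and> strict_mono_on {..<c} ((!) p)"

definition top_decreasing_suffix :: "nat \<Rightarrow> bool" where
  "top_decreasing_suffix c \<longleftrightarrow> (\<forall>t\<in>{c..<n}. L \<le> p!t) \<and> strict_antimono_on {c..<n} ((!) p)"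

lemma bottom_increasing_prefix_before_ascent:
  assumes "q < r" "r < n - 1" "p!q < p!r" "p!r < L"
  shows "bottom_increasing_prefix (Suc q)"
proof -
  have below: "p!t < L" if "t \<le> q" for t
    using no_4123_ending_last[of t q r] nth_less_or_greater[of t "n - 1"] that assms
    by (cases "t = q") auto
  have "strict_mono_on {..<Suc q} ((!) p)"
  proof (rule strict_mono_onI)
    fix u v assume uv: "u \<in> {..<Suc q}" "v \<in> {..<Suc q}" "u < v"
    show "p!u < p!v"
    proof (rule ccontr)
      assume "\<not> p!u < p!v"
      then have vu: "p!v < p!u" using nth_less_or_greater[of u v] uv assms by auto
      define m where "m = (if p!v < p!q then v else q)"
      have m: "u < m" "m < r" "p!m < p!u" "p!m < p!r"
        unfolding m_def using uv vu assms by auto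
      show False
        using no_2134_ending_last[of u m r] no_3124[of u m r "n - 1"] below[of u]
          nth_less_or_greater[of u r] m uv assms by auto
    qed
  qed
  then show ?thesis using below assms unfolding bottom_increasing_prefix_def by auto
qed

lemma top_decreasing_suffix_after_descent:
  assumes "q < r" "r < n" "L < p!r" "p!r < p!q"
  shows "top_decreasing_suffix r"
proof -
  have above: "L \<le> p!t" if "r \<le> t" "t < n" for t
  proof (cases "t = r \<or> t = n - 1")
    case False
    then have "r < t" "t < n - 1" using that by auto
    then show ?thesis
      using no_4312_ending_last[of q r t] nth_less_or_greater[of t "n - 1"] assms by force
  qed (use assms in auto)
  have "strict_antimono_on {r..<n} ((!) p)"
  proof (rule monotone_onI)
    fix u v assume uv: "u \<in> {r..<n}" "v \<in> {r..<n}" "u < v"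
    show "p!v < p!u"
    proof (rule ccontr)
      assume "\<not> p!v < p!u"
      then have uv': "p!u < p!v" using nth_less_or_greater[of u v] uv by auto
      have "L < p!u" using above[of u] uv nth_less_or_greater[of u "n - 1"] by (auto simp: le_less)
      then have "v < n - 1" using uv uv' by (cases "v = n - 1") auto
      define m where "m = (if p!u \<le> p!r then u else r)"
      have m: "q < m" "m < v" "L < p!m" "p!m < p!q" "p!m < p!v"
        unfolding m_def using uv uv' assms \<open>L < p!u\<close> by auto
      show False
        using no_3241_ending_last[of q m v] no_4231[of q m v "n - 1"]
          nth_less_or_greater[of q v] m \<open>v < n - 1\<close> assms by auto
    qed
  qed
  then show ?thesis using above unfolding top_decreasing_suffix_def by auto
qed

lemma top_decreasing_suffix_last: "top_decreasing_suffix (n - 1)"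
proof -
  have "{n - 1..<n} = {n - 1}" using nonempty by auto
  then show ?thesis unfolding top_decreasing_suffix_def by (auto intro: monotone_onI)
qed

lemma bottom_decreasing_after_maximal_prefix:
  assumes c1_max: "\<And>c. bottom_increasing_prefix c \<Longrightarrow> c \<le> c1"
  shows "strict_antimono_on {q. c1 \<le> q \<and> q < n - 1 \<and> p!q < L} ((!) p)"
proof (rule monotone_onI)
  fix q r assume qr: "q \<in> {q. c1 \<le> q \<and> q < n - 1 \<and> p!q < L}"
    "r \<in> {q. c1 \<le> q \<and> q < n - 1 \<and> p!q < L}" "q < r"
  show "p!r < p!q"
  proof (rule ccontr)
    assume "\<not> p!r < p!q"
    then have "p!q < p!r" using qr nth_less_or_greater[of q r] by auto
    then have "bottom_increasing_prefix (Suc q)"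
      using bottom_increasing_prefix_before_ascent[of q r] qr by auto
    then show False using c1_max qr by fastforce
  qed
qed

lemma top_increasing_before_minimal_suffix:
  assumes c2_min: "\<And>c. top_decreasing_suffix c \<Longrightarrow> c2 \<le> c"
  shows "strict_mono_on {q. q < c2 \<and> L \<le> p!q} ((!) p)"
proof (rule strict_mono_onI)
  have "c2 \<le> n - 1" using c2_min top_decreasing_suffix_last by blast
  fix q r assume qr: "q \<in> {q. q < c2 \<and> L \<le> p!q}" "r \<in> {q. q < c2 \<and> L \<le> p!q}" "q < r"
  show "p!q < p!r"
  proof (rule ccontr)
    assume "\<not> p!q < p!r"
    then have "L < p!r" "p!r < p!q"
      using qr \<open>c2 \<le> n - 1\<close> nth_less_or_greater[of q r] nth_less_or_greater[of r "n - 1"] by auto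
    then have "top_decreasing_suffix r"
      using top_decreasing_suffix_after_descent[of q r] qr \<open>c2 \<le> n - 1\<close> by auto
    then show False using c2_min qr by fastforce
  qed
qed

lemma ex_figM_gridding_last_entry: "\<exists>c1 c2. figM_gridding p c1 c2 L"
proof -
  obtain c1 where c1: "bottom_increasing_prefix c1"
    and c1_max: "\<And>c. bottom_increasing_prefix c \<Longrightarrow> c \<le> c1"
    using Nat.ex_has_greatest_nat[of bottom_increasing_prefix 0 n]
    by (auto simp: bottom_increasing_prefix_def)
  obtain c2 where c2: "top_decreasing_suffix c2"
    and c2_min: "\<And>c. top_decreasing_suffix c \<Longrightarrow> c2 \<le> c"
    using ex_has_least_nat[of top_decreasing_suffix "n - 1" "\<lambda>c. c"] top_decreasing_suffix_last
    by blast
  have "c2 \<le> n - 1" using c2_min[OF top_decreasing_suffix_last] .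
  then have "c2 < n" using last_less_length by linarith
  have "c1 \<le> c2"
  proof (rule ccontr)
    assume "\<not> c1 \<le> c2"
    then have "p!c2 < L" using c1 unfolding bottom_increasing_prefix_def by auto
    moreover have "L \<le> p!c2" using c2 \<open>c2 < n\<close> unfolding top_decreasing_suffix_def by auto
    ultimately show False by simp
  qed
  moreover have "strict_mono_on {q\<in>{c1..<c2}. L \<le> p!q} ((!) p)"
    using top_increasing_before_minimal_suffix[of c2, OF c2_min] by (rule monotone_on_subset) auto
  moreover have "strict_antimono_on {q\<in>{c1..<c2}. p!q < L} ((!) p)"
  proof (rule monotone_on_subset)
    show "strict_antimono_on {q. c1 \<le> q \<and> q < n - 1 \<and> p!q < L} ((!) p)"
      using c1_max by (rule bottom_decreasing_after_maximal_prefix)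
  qed (use \<open>c2 \<le> n - 1\<close> in auto)
  ultimately show ?thesis
    using c1 c2 \<open>c2 < n\<close> unfolding figM_gridding_def bottom_increasing_prefix_def top_decreasing_suffix_def
    by (intro exI[of _ c1] exI[of _ c2]) auto
qed

end

lemma figM_gridding_if_simple_avoider:
  assumes "is_perm p" "simple_perm p" "avoids p [4,2,3,1]" "avoids p [3,1,2,4]"
  shows "\<exists>c1 c2 L. figM_gridding p c1 c2 L"
proof (cases "p = []")
  case True
  then show ?thesis unfolding figM_gridding_def by auto
next
  case False
  then interpret simple_avoider p using assms by unfold_locales
  show ?thesis using ex_figM_gridding_last_entry by blast
qed

section \<open>Gridded permutations are drawn on the figure\<close>

locale figM_gridded =
  fixes p :: "nat list" and c1 c2 L :: nat
  assumes perm: "is_perm p" and gridding: "figM_gridding p c1 c2 L"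
begin

abbreviation "n \<equiv> length p"

definition N :: nat where "N = Suc n"

definition top_reach :: "nat \<Rightarrow> nat" where
  "top_reach v = Max (insert 0 {Suc q | q. c1 \<le> q \<and> q < c2 \<and> L \<le> p!q \<and> p!q \<le> v})"

definition bottom_reach :: "nat \<Rightarrow> nat" where
  "bottom_reach v = Max (insert 0 {Suc q | q. c1 \<le> q \<and> q < c2 \<and> p!q < L \<and> v \<le> p!q})"

text \<open>Read in base N, the key of a value v has as leading digit one more than the last
middle-column position that must lie to the left of the point with value v. Hence middle-column
points ordered by key are ordered by position, whichever segment they lie on; the last digit,
v or N - v, orders values with the same leading digit along their segment.\<close>

definition key :: "nat \<Rightarrow> nat" where
  "key v = (if L \<le> v then N * top_reach v + v else N * bottom_reach v + (N - v))"

lemma gridding_facts: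
  shows c1_le_c2: "c1 \<le> c2" and c2_le: "c2 \<le> n"
    and prefix_below: "q < c1 \<Longrightarrow> p!q < L"
    and suffix_above: "c2 \<le> q \<Longrightarrow> q < n \<Longrightarrow> L \<le> p!q"
    and prefix_increasing: "q < r \<Longrightarrow> r < c1 \<Longrightarrow> p!q < p!r"
    and suffix_decreasing: "c2 \<le> q \<Longrightarrow> q < r \<Longrightarrow> r < n \<Longrightarrow> p!r < p!q"
    and middle_top_increasing:
      "c1 \<le> q \<Longrightarrow> q < r \<Longrightarrow> r < c2 \<Longrightarrow> L \<le> p!q \<Longrightarrow> L \<le> p!r \<Longrightarrow> p!q < p!r"
    and middle_bottom_decreasing:
      "c1 \<le> q \<Longrightarrow> q < r \<Longrightarrow> r < c2 \<Longrightarrow> p!q < L \<Longrightarrow> p!r < L \<Longrightarrow> p!r < p!q"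
  using gridding unfolding figM_gridding_def monotone_on_def by auto

lemma finite_reach_sets:
  "finite {Suc q | q. c1 \<le> q \<and> q < c2 \<and> L \<le> p!q \<and> p!q \<le> v}"
  "finite {Suc q | q. c1 \<le> q \<and> q < c2 \<and> p!q < L \<and> v \<le> p!q}"
  by (rule finite_subset[of _ "Suc ` {..<c2}"]; auto)+

lemma reach_le: "top_reach v \<le> n" "bottom_reach v \<le> n"
  unfolding top_reach_def bottom_reach_def using finite_reach_sets c2_le by auto

lemma top_reach_mono: "v \<le> w \<Longrightarrow> top_reach v \<le> top_reach w"
  unfolding top_reach_def using finite_reach_sets by (intro Max_mono) auto

lemma bottom_reach_antimono: "v \<le> w \<Longrightarrow> bottom_reach w \<le> bottom_reach v"
  unfolding bottom_reach_def using finite_reach_sets by (intro Max_mono) auto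

lemma top_reach_middle:
  assumes "c1 \<le> q" "q < c2" "L \<le> p!q"
  shows "top_reach (p!q) = Suc q"
  unfolding top_reach_def
proof (rule Max_eqI)
  fix y assume "y \<in> insert 0 {Suc q' | q'. c1 \<le> q' \<and> q' < c2 \<and> L \<le> p!q' \<and> p!q' \<le> p!q}"
  moreover have "\<not> p!q' \<le> p!q" if "q < q'" "q' < c2" "L \<le> p!q'" for q'
    using middle_top_increasing[of q q'] that assms by auto
  ultimately show "y \<le> Suc q" by (auto simp: not_less[symmetric])
qed (use finite_reach_sets assms in auto)

lemma bottom_reach_middle:
  assumes "c1 \<le> q" "q < c2" "p!q < L"
  shows "bottom_reach (p!q) = Suc q"
  unfolding bottom_reach_def
proof (rule Max_eqI)
  fix y assume "y \<in> insert 0 {Suc q' | q'. c1 \<le> q' \<and> q' < c2 \<and> p!q' < L \<and> p!q \<le> p!q'}"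
  moreover have "\<not> p!q \<le> p!q'" if "q < q'" "q' < c2" "p!q' < L" for q'
    using middle_bottom_decreasing[of q q'] that assms by auto
  ultimately show "y \<le> Suc q" by (auto simp: not_less[symmetric])
qed (use finite_reach_sets assms in auto)

lemma nth_bounds: "i < n \<Longrightarrow> 1 \<le> p!i \<and> p!i \<le> n"
  using is_perm_nth_bounds[OF perm] by blast

lemma key_bounds:
  assumes "1 \<le> v" "v \<le> n"
  shows "0 < key v" "key v < N * N"
proof -
  have "N * top_reach v \<le> N * n" "N * bottom_reach v \<le> N * n" "N - v \<le> n"
    using reach_le[of v] assms by (simp_all add: N_def mult_le_mono2 del: mult_Suc)
  then have "N * top_reach v + v \<le> N * n + n" "N * bottom_reach v + (N - v) \<le> N * n + n"
    using assms by linarith+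
  moreover have "N * n + n < N * N" by (simp add: N_def)
  ultimately show "key v < N * N" unfolding key_def by auto
  show "0 < key v" using assms by (simp add: key_def N_def)
qed

lemma key_top_increasing: "L \<le> v \<Longrightarrow> v < w \<Longrightarrow> key v < key w"
  using top_reach_mono[of v w] unfolding key_def
  by (simp add: add_le_less_mono)

lemma key_bottom_decreasing:
  assumes "v < w" "w < L" "w \<le> n"
  shows "key w < key v"
proof -
  have "N * bottom_reach w \<le> N * bottom_reach v" using bottom_reach_antimono[of v w] assms by simp
  moreover have "N - w < N - v" using assms by (simp add: N_def)
  ultimately have "N * bottom_reach w + (N - w) < N * bottom_reach v + (N - v)"
    by (rule add_le_less_mono)
  then show ?thesis using assms by (simp add: key_def)
qed

lemma key_middle:
  assumes "c1 \<le> q" "q < c2"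
  shows "N * Suc q \<le> key (p!q)" "key (p!q) < N * Suc (Suc q)"
proof -
  have "1 \<le> p!q" "p!q \<le> n" using nth_bounds[of q] assms c2_le by auto
  then show "N * Suc q \<le> key (p!q)" "key (p!q) < N * Suc (Suc q)"
    using top_reach_middle[of q] bottom_reach_middle[of q] assms
    unfolding key_def N_def by auto
qed

lemma key_middle_increasing:
  assumes "c1 \<le> q" "q < r" "r < c2"
  shows "key (p!q) < key (p!r)"
proof -
  have "key (p!q) < N * Suc (Suc q)" using key_middle assms by simp
  also have "\<dots> \<le> N * Suc r" using assms by (intro mult_le_mono2) simp
  also have "\<dots> \<le> key (p!r)" using key_middle assms by simp
  finally show ?thesis .
qed

definition offset :: "nat \<Rightarrow> real" where
  "offset v = real (key v) / real (N * N)"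

definition height :: "nat \<Rightarrow> real" where
  "height v = (if L \<le> v then 1 + offset v else 1 - offset v)"

lemma N_pos: "0 < N"
  by (simp add: N_def)

lemma offset_bounds: "1 \<le> v \<Longrightarrow> v \<le> n \<Longrightarrow> 0 < offset v \<and> offset v < 1"
  using key_bounds[of v] N_pos unfolding offset_def by (simp add: divide_simps flip: of_nat_mult)

lemma offset_less_iff_key: "offset v < offset w \<longleftrightarrow> key v < key w"
  using N_pos unfolding offset_def by (simp add: divide_less_cancel)

lemma height_increasing:
  assumes "1 \<le> v" "v < w" "w \<le> n"
  shows "height v < height w"
proof -
  have "0 < offset v \<and> offset v < 1" "0 < offset w \<and> offset w < 1"
    using offset_bounds assms by auto
  then show ?thesis
    using key_top_increasing[of v w] key_bottom_decreasing[of v w] assms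
    unfolding height_def offset_less_iff_key[symmetric] by auto
qed

definition point_y :: "nat \<Rightarrow> real" where
  "point_y i = height (p!i)"

definition point_x :: "nat \<Rightarrow> real" where
  "point_x i = (if i < c1 then point_y i else if i < c2 then 1 + offset (p!i) else 4 - point_y i)"

lemma offset_nth_bounds: "i < n \<Longrightarrow> 0 < offset (p!i) \<and> offset (p!i) < 1"
  using offset_bounds nth_bounds by blast

lemma point_in_figM: "i < n \<Longrightarrow> (point_x i, point_y i) \<in> figM"
  using offset_nth_bounds[of i] prefix_below[of i] suffix_above[of i] c1_le_c2
  unfolding figM_def point_x_def point_y_def height_def
  by (cases "i < c1"; cases "i < c2"; cases "L \<le> p!i") auto

lemma point_y_less_iff: "i < n \<Longrightarrow> j < n \<Longrightarrow> point_y i < point_y j \<longleftrightarrow> p!i < p!j"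
  using height_increasing nth_bounds unfolding point_y_def
  by (metis linorder_neqE_nat order_less_asym order_less_irrefl)

lemma point_x_increasing:
  assumes "i < j" "j < n"
  shows "point_x i < point_x j"
proof -
  have i: "0 < offset (p!i) \<and> offset (p!i) < 1" and j: "0 < offset (p!j) \<and> offset (p!j) < 1"
    using offset_nth_bounds assms by auto
  consider "j < c1" | "i < c1" "c1 \<le> j" | "c1 \<le> i" "j < c2" | "c1 \<le> i" "i < c2" "c2 \<le> j"
    | "c2 \<le> i" using assms by linarith
  then show ?thesis
  proof cases
    case 1
    then show ?thesis
      using point_y_less_iff[of i j] prefix_increasing[of i j] assms unfolding point_x_def by auto
  next
    case 2
    then show ?thesis
      using i j prefix_below[of i] suffix_above[of j] assms
      unfolding point_x_def point_y_def height_def by auto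
  next
    case 3
    then show ?thesis
      using key_middle_increasing[of i j] assms unfolding point_x_def offset_less_iff_key[symmetric] by auto
  next
    case 4
    then show ?thesis
      using i j suffix_above[of j] assms unfolding point_x_def point_y_def height_def by auto
  next
    case 5
    then show ?thesis
      using point_y_less_iff[of j i] suffix_decreasing[of i j] c1_le_c2 assms
      unfolding point_x_def by auto
  qed
qed

lemma in_Geom_figM: "p \<in> Geom figM"
  unfolding Geom_def
  using perm point_in_figM point_x_increasing point_y_less_iff
  by (intro CollectI conjI exI[of _ point_x] exI[of _ point_y]) auto

end

lemma Geom_figM_if_gridding:
  "is_perm p \<Longrightarrow> figM_gridding p c1 c2 L \<Longrightarrow> p \<in> Geom figM"
  by (rule figM_gridded.in_Geom_figM) unfold_locales

theorem proposition5p1: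
  fixes p :: "nat list"
  assumes "is_perm p"
  shows "(simple_perm p \<and> avoids p [4,2,3,1] \<and> avoids p [3,1,2,4])
           \<longleftrightarrow> (simple_perm p \<and> p \<in> Geom figM)"
  using figM_gridding_if_simple_avoider[OF assms] Geom_figM_if_gridding[OF assms] Geom_figM_avoids
  by blast

end
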